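(* Let $\mu\in\mathbb{C}$ with $\operatorname{Re}(\mu)>-1$, let $0<\xi<1$, $a>0$ and $y>0$. Then $$\int_{0}^{\infty}x^{\mu}\exp(-a x^{\xi})\cos(xy)\,dx=-y^{-\mu-1}\sum_{\ell=0}^{\infty}\frac{1}{\ell!}\left(-\frac{a}{y^{\xi}}\right)^{\ell}\Gamma(\mu+1+\xi\ell)\,\sin\!\left\{\frac{\pi}{2}(\mu+\xi\ell)\right\},$$ where the series on the right converges.
   Context: $\Gamma$ denotes Euler's Gamma function; $x^{\mu}=e^{\mu\log x}$ for $x>0$ (principal branch). *)

theory Defs
  imports "HOL-Analysis.Analysis"
begin

end

theory Submission
  imports Defs
begin

text \<open>
  Damp the integrand by the factor exp(-\<epsilon>x). For \<epsilon> > 0, expand exp(-a x^\<xi>) into its power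
  series and integrate termwise; the terms are Mellin transforms
    \<integral> x^(s-1) exp(-\<epsilon>x) cos(xy) dx = \<Gamma>(s) ((\<epsilon> - iy)^(-s) + (\<epsilon> + iy)^(-s)) / 2,
  and the interchange is justified by dominated convergence because \<xi> < 1 gives
  a x^\<xi> \<le> \<epsilon>x/2 + C. Then let \<epsilon> \<rightarrow> 0: the integrals converge by dominated convergence,
  x^(Re \<mu>) exp(-a x^\<xi>) being integrable, and the series converge by Tannery's theorem with the
  majorant a^k/k! \<Gamma>(Re s_k) y^(-Re s_k) exp(\<pi>|Im \<mu>|/2), where s_k = \<mu> + 1 + \<xi>k; its partial
  sums are themselves bounded by a damped integral. At \<epsilon> = 0 the powers (\<mp>iy)^(-s) combine to
  2 y^(-s) cos(\<pi>s/2), and cos(\<pi>s/2) = -sin(\<pi>(s-1)/2).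
\<close>

section \<open>Laplace transforms of powers\<close>

lemma has_integral_scale_Ioi:
  fixes f :: "real \<Rightarrow> complex"
  assumes f: "f absolutely_integrable_on {0<..}" and r: "r > 0"
  shows "((\<lambda>x. f (r * x)) has_integral (integral {0<..} f / of_real r)) {0<..}"
    and "(\<lambda>x. f (r * x)) absolutely_integrable_on {0<..}"
proof -
  define F where "F = (\<lambda>x. indicator {0<..} x *\<^sub>R f x)"
  have "has_bochner_integral lebesgue F (integral\<^sup>L lebesgue F)"
    using f unfolding set_integrable_def F_def by (simp add: has_bochner_integral_iff)
  hence "has_bochner_integral lebesgue (\<lambda>x. F (0 + r * x)) (integral\<^sup>L lebesgue F /\<^sub>R \<bar>r\<bar>)"
    using has_bochner_integral_lebesgue_real_affine_iff[of r F _ 0] r by simp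
  moreover have "(\<lambda>x. F (0 + r * x)) = (\<lambda>x. indicator {0<..} x *\<^sub>R f (r * x))"
    using r by (auto simp: F_def indicator_def fun_eq_iff zero_less_mult_iff)
  ultimately have scaled: "has_bochner_integral lebesgue (\<lambda>x. indicator {0<..} x *\<^sub>R f (r * x))
      (integral\<^sup>L lebesgue F /\<^sub>R \<bar>r\<bar>)"
    by simp
  hence int: "set_integrable lebesgue {0<..} (\<lambda>x. f (r * x))"
    unfolding set_integrable_def by (simp add: has_bochner_integral_iff)
  thus "(\<lambda>x. f (r * x)) absolutely_integrable_on {0<..}" .
  have "(LINT x:{0<..}|lebesgue. f (r * x)) = integral\<^sup>L lebesgue F /\<^sub>R \<bar>r\<bar>"
    using scaled unfolding set_lebesgue_integral_def by (simp add: has_bochner_integral_iff)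
  moreover have "integral\<^sup>L lebesgue F = integral {0<..} f"
    using set_lebesgue_integral_eq_integral(2)[OF f] unfolding set_lebesgue_integral_def F_def by simp
  ultimately show "((\<lambda>x. f (r * x)) has_integral (integral {0<..} f / of_real r)) {0<..}"
    using has_integral_set_lebesgue[OF int] r by (simp add: scaleR_conv_of_real divide_inverse mult.commute)
qed

lemma Gamma_has_integral_Ioi:
  fixes s :: complex assumes "Re s > 0"
  shows "((\<lambda>t. of_real t powr (s - 1) / of_real (exp t)) has_integral Gamma s) {0<..}"
    and "(\<lambda>t. of_real t powr (s - 1) / of_real (exp t)) absolutely_integrable_on {0<..}"
proof -
  show int: "(\<lambda>t. of_real t powr (s - 1) / of_real (exp t)) absolutely_integrable_on {0<..}"
    using absolutely_integrable_Gamma_integral[OF assms, of 1] by simp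
  have "integral {0<..} (\<lambda>t. of_real t powr (s - 1) / of_real (exp t))
      = integral {0..} (\<lambda>t. of_real t powr (s - 1) / of_real (exp t))"
    by (rule integral_spike_set) (auto intro: negligible_subset[of "{0}"])
  also have "\<dots> = Gamma s" using Gamma_integral_complex[OF assms] by (rule integral_unique)
  finally show "((\<lambda>t. of_real t powr (s - 1) / of_real (exp t)) has_integral Gamma s) {0<..}"
    using int set_lebesgue_integral_eq_integral(1) has_integral_integrable_integral by metis
qed

lemma has_integral_powr_exp_of_real:
  fixes s :: complex assumes s: "Re s > 0" and r: "r > 0"
  shows "((\<lambda>x. of_real x powr (s - 1) * exp (- (of_real r * of_real x)))
           has_integral Gamma s * of_real r powr (-s)) {0<..}"
    and "(\<lambda>x. of_real x powr (s - 1) * exp (- (of_real r * of_real x))) absolutely_integrable_on {0<..}"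
proof -
  define f where "f = (\<lambda>t. of_real t powr (s - 1) / of_real (exp t) :: complex)"
  note \<Gamma> = Gamma_has_integral_Ioi[OF s, folded f_def]
  note scaled = has_integral_scale_Ioi[OF \<Gamma>(2) r]
  define c where "c = (of_real r powr (s - 1) :: complex)"
  have c: "c \<noteq> 0" using r by (simp add: c_def)
  have f_scaled: "f (r * x) = c * (of_real x powr (s - 1) * exp (- (of_real r * of_real x)))"
    if "x > 0" for x
  proof -
    have "of_real (r * x) powr (s - 1) = c * of_real x powr (s - 1)"
      using r that by (simp add: c_def powr_times_real)
    moreover have "1 / complex_of_real (exp (r * x)) = exp (- (of_real r * of_real x))"
      by (simp add: exp_of_real[symmetric] exp_minus field_simps)
    ultimately show ?thesis unfolding f_def by (simp add: field_simps)
  qed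
  have "((\<lambda>x. c * (of_real x powr (s - 1) * exp (- (of_real r * of_real x))))
         has_integral Gamma s / of_real r) {0<..}"
    using scaled(1) unfolding integral_unique[OF \<Gamma>(1)]
    by (rule has_integral_eq[rotated]) (auto simp: f_scaled)
  from has_integral_mult_right[OF this, of "1 / c"]
  show "((\<lambda>x. of_real x powr (s - 1) * exp (- (of_real r * of_real x)))
          has_integral Gamma s * of_real r powr (-s)) {0<..}"
    using r c by (simp add: c_def powr_diff powr_minus field_simps)
  have "(\<lambda>x. (1 / c) * f (r * x)) absolutely_integrable_on {0<..}"
    using scaled(2) by (intro set_integrable_mult_right)
  thus "(\<lambda>x. of_real x powr (s - 1) * exp (- (of_real r * of_real x))) absolutely_integrable_on {0<..}"
    by (rule set_integrable_cong[THEN iffD1, rotated -1]) (use c in \<open>auto simp: f_scaled\<close>)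
qed

lemma has_integral_powr_exp_real:
  fixes p b :: real assumes p: "p > -1" and b: "b > 0"
  shows "((\<lambda>x. x powr p * exp (- (b * x))) has_integral Gamma (p + 1) * b powr (-(p + 1))) {0<..}"
proof -
  have "Re (complex_of_real (p + 1)) > 0" using p by simp
  note lifted = has_integral_Re[OF has_integral_powr_exp_of_real(1)[OF this b]]
  have rhs: "Re (Gamma (of_real (p + 1)) * of_real b powr (- of_real (p + 1)))
      = Gamma (p + 1) * b powr (-(p + 1))"
  proof -
    have "of_real b powr (- of_real (p + 1)) = (of_real (b powr (-(p + 1))) :: complex)"
      using powr_of_real[of b "-(p + 1)"] b by (simp only: of_real_minus)
    thus ?thesis unfolding Gamma_complex_of_real by (metis Re_complex_of_real of_real_mult)
  qed
  have integrand: "Re (of_real x powr (of_real (p + 1) - 1) * exp (- (of_real b * of_real x)))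
      = x powr p * exp (- (b * x))" if "x \<in> {0<..}" for x
  proof -
    have "of_real x powr (of_real (p + 1) - 1) * exp (- (of_real b * of_real x))
        = (of_real (x powr p * exp (- (b * x))) :: complex)"
      using that by (simp add: powr_of_real[symmetric] exp_of_real[symmetric])
    thus ?thesis by (metis Re_complex_of_real)
  qed
  show ?thesis by (rule has_integral_eq[OF integrand lifted[unfolded rhs]])
qed


lemma of_real_powr_add_of_nat:
  fixes s :: complex assumes "x > 0"
  shows "complex_of_real x powr (s + of_nat n - 1) = of_real x powr (s - 1) * of_real x ^ n"
proof -
  have "complex_of_real x powr (s + of_nat n - 1) = of_real x powr ((s - 1) + of_nat n)"
    by (simp add: algebra_simps)
  also have "\<dots> = of_real x powr (s - 1) * of_real x powr (of_nat n)"
    using assms by (simp add: powr_add)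
  also have "of_real x powr (of_nat n) = (of_real x :: complex) ^ n"
    using assms by (intro powr_nat') simp
  finally show ?thesis .
qed

lemma Gamma_add_of_nat:
  fixes s :: complex assumes "Re s > 0"
  shows "Gamma (s + of_nat n) = Gamma s * pochhammer s n"
proof -
  have "s \<notin> \<int>\<^sub>\<le>\<^sub>0" using assms by (auto elim!: nonpos_Ints_cases)
  hence "Gamma s \<noteq> 0" by (simp add: Gamma_eq_zero_iff)
  thus ?thesis using pochhammer_Gamma[OF \<open>s \<notin> \<int>\<^sub>\<le>\<^sub>0\<close>, of n] by simp
qed

lemma sum_exp_series_le_exp:
  fixes t :: real assumes "t \<ge> 0"
  shows "(\<Sum>n<N. t ^ n / fact n) \<le> exp t"
proof -
  have "(\<lambda>n. t ^ n / fact n) sums exp t"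
    using exp_converges[of t] by (simp add: divide_inverse mult.commute)
  hence "(\<Sum>n<N. t ^ n / fact n) \<le> (\<Sum>n. t ^ n / fact n)"
    using assms by (intro sum_le_suminf) (auto simp: sums_iff)
  with \<open>(\<lambda>n. t ^ n / fact n) sums exp t\<close> show ?thesis by (simp add: sums_iff)
qed

lemma Gamma_powr_series_coeff:
  fixes s w :: complex assumes "Re s > 0" "r > 0"
  shows "(-w) ^ n / fact n * (Gamma (s + of_nat n) * of_real r powr (-(s + of_nat n)))
       = Gamma s * of_real r powr (-s) * (((-s) gchoose n) * (w / of_real r) ^ n)"
proof -
  have "complex_of_real r powr (-(s + of_nat n)) * of_real r powr (of_nat n) = of_real r powr (-s)"
    by (simp only: powr_add[symmetric]) simp
  moreover have "complex_of_real r powr (of_nat n) = of_real r ^ n"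
    using assms(2) by (intro powr_nat') simp
  ultimately have "complex_of_real r powr (-(s + of_nat n)) = of_real r powr (-s) / of_real r ^ n"
    using assms(2) by (simp add: field_simps)
  thus ?thesis
    unfolding Gamma_add_of_nat[OF assms(1)] gbinomial_pochhammer using assms(2)
    by (simp add: power_divide power_minus[of w] field_simps)
qed

text \<open>
  Write z = r + w with the real r = |z|^2 / Re z, for which |w| < r. Expanding exp(-wx) and
  integrating termwise against x^(s-1) exp(-rx) yields the binomial series of
  \<Gamma>(s) r^(-s) (1 + w/r)^(-s) = \<Gamma>(s) z^(-s); the partial sums are dominated by
  x^(Re s - 1) exp(-(r - |w|)x).
\<close>

lemma has_integral_powr_exp:
  fixes s z :: complex assumes s: "Re s > 0" and z: "Re z > 0"
  shows "((\<lambda>x. of_real x powr (s - 1) * exp (- (z * of_real x))) has_integral Gamma s * z powr (-s)) {0<..}"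
proof -
  define r where "r = (cmod z)\<^sup>2 / Re z"
  define w where "w = z - of_real r"
  define q where "q = cmod w"
  have "z \<noteq> 0" using z by auto
  have r: "r > 0" using z \<open>z \<noteq> 0\<close> unfolding r_def by auto
  have "q\<^sup>2 = (Re z - r)\<^sup>2 + (Im z)\<^sup>2" unfolding q_def w_def by (simp add: cmod_power2)
  also have "\<dots> = ((Re z)\<^sup>2 + (Im z)\<^sup>2) - 2 * (r * Re z) + r\<^sup>2"
    by (simp add: power2_eq_square algebra_simps)
  also have "(Re z)\<^sup>2 + (Im z)\<^sup>2 = (cmod z)\<^sup>2" by (simp add: cmod_power2)
  also have "r * Re z = (cmod z)\<^sup>2" using z unfolding r_def by simp
  finally have "q\<^sup>2 < r\<^sup>2" using \<open>z \<noteq> 0\<close> by simp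
  hence qr: "q < r" using r by (smt (verit) power_mono q_def norm_ge_zero)
  define A where "A = (\<lambda>x. of_real x powr (s - 1) * exp (- (of_real r * of_real x)) :: complex)"
  define f where "f = (\<lambda>N x. \<Sum>n<N. A x * ((- w * of_real x) ^ n / fact n))"
  define c where "c = (\<lambda>n. (-w) ^ n / fact n * (Gamma (s + of_nat n) * of_real r powr (-(s + of_nat n))))"
  define g where "g = (\<lambda>x. of_real x powr (s - 1) * exp (- (z * of_real x)))"
  define h where "h = (\<lambda>x. x powr (Re s - 1) * exp (- ((r - q) * x)))"
  have f_int: "(f N has_integral (\<Sum>n<N. c n)) {0<..}" for N
    unfolding f_def
  proof (rule has_integral_sum)
    fix n
    have "Re (s + of_nat n) > 0" using s by simp
    hence "((\<lambda>x. (-w) ^ n / fact n * (of_real x powr (s + of_nat n - 1) * exp (- (of_real r * of_real x))))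
            has_integral c n) {0<..}"
      unfolding c_def by (intro has_integral_mult_right has_integral_powr_exp_of_real(1) r)
    thus "((\<lambda>x. A x * ((- w * of_real x) ^ n / fact n)) has_integral c n) {0<..}"
      by (rule has_integral_eq[rotated]) (simp add: A_def of_real_powr_add_of_nat flip: power_mult_distrib)
  qed auto
  have h_int: "h integrable_on {0<..}"
  proof -
    have "Re (complex_of_real (Re s)) > 0" using s by simp
    from has_integral_powr_exp_of_real(2)[OF this, of "r - q"] qr
    have "(\<lambda>x. norm (of_real x powr (of_real (Re s) - 1) * exp (- (of_real (r - q) * of_real x)) :: complex))
        integrable_on {0<..}"
      by (simp add: absolutely_integrable_on_def)
    thus ?thesis
      by (rule integrable_eq) (simp add: h_def norm_mult norm_powr_real_powr exp_of_real[symmetric] del: of_real_diff)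
  qed
  have f_bound: "norm (f N x) \<le> h x" if x: "x \<in> {0<..}" for N x
  proof -
    have "f N x = A x * (\<Sum>n<N. (- w * of_real x) ^ n / fact n)"
      unfolding f_def by (simp add: sum_distrib_left)
    hence "norm (f N x) = norm (A x) * norm (\<Sum>n<N. (- w * of_real x) ^ n / fact n)"
      by (simp add: norm_mult)
    also have "norm (A x) = x powr (Re s - 1) * exp (- (r * x))"
      using x by (simp add: A_def norm_mult norm_powr_real_powr exp_of_real[symmetric] del: of_real_mult)
    also have "norm (\<Sum>n<N. (- w * of_real x) ^ n / fact n) \<le> (\<Sum>n<N. (q * x) ^ n / fact n)"
      by (rule order.trans[OF norm_sum]) (use x in \<open>simp add: norm_divide norm_power norm_mult q_def\<close>)
    also have "\<dots> \<le> exp (q * x)" using x by (intro sum_exp_series_le_exp) (simp add: q_def)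
    finally have "norm (f N x) \<le> x powr (Re s - 1) * exp (- (r * x)) * exp (q * x)"
      by (simp add: mult_left_mono)
    also have "\<dots> = h x" by (simp add: h_def algebra_simps flip: exp_add)
    finally show ?thesis .
  qed
  have f_lim: "(\<lambda>N. f N x) \<longlonglongrightarrow> g x" if "x \<in> {0<..}" for x
  proof -
    have "(\<lambda>n. (- w * of_real x) ^ n / fact n) sums exp (- w * of_real x)"
      using exp_converges[of "- w * of_real x"] by (simp add: scaleR_conv_of_real divide_inverse mult.commute)
    hence "(\<lambda>n. A x * ((- w * of_real x) ^ n / fact n)) sums (A x * exp (- w * of_real x))"
      by (rule sums_mult)
    moreover have "A x * exp (- w * of_real x) = g x"
      by (simp add: A_def g_def w_def mult.assoc flip: exp_add) (simp add: algebra_simps)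
    ultimately show ?thesis unfolding f_def sums_def by simp
  qed
  have "f N integrable_on {0<..}" for N using f_int by blast
  note DC = dominated_convergence[OF this h_int f_bound f_lim]
  have "c sums integral {0<..} g"
    using DC(2) unfolding sums_def integral_unique[OF f_int] .
  moreover have "c sums (Gamma s * z powr (-s))"
  proof -
    have "norm (w / of_real r) < 1" using qr r by (simp add: q_def norm_divide)
    from sums_mult[OF gen_binomial_complex[OF this, of "-s"], of "Gamma s * of_real r powr (-s)"]
    have "(\<lambda>n. Gamma s * of_real r powr (-s) * (((-s) gchoose n) * (w / of_real r) ^ n))
        sums (Gamma s * of_real r powr (-s) * (1 + w / of_real r) powr (-s))" .
    moreover have "of_real r powr (-s) * (1 + w / of_real r) powr (-s) = z powr (-s)"
      using r by (subst powr_times_real_left[symmetric]) (auto simp: w_def field_simps)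
    ultimately show ?thesis
      unfolding c_def using Gamma_powr_series_coeff[OF s r] by (simp add: mult.assoc)
  qed
  ultimately have "integral {0<..} g = Gamma s * z powr (-s)" using sums_unique2 by blast
  thus ?thesis using DC(1) unfolding g_def by (metis integrable_integral)
qed


lemma powr_le_linear_plus_const:
  fixes a e \<xi> :: real assumes a: "a > 0" and e: "e > 0" and \<xi>: "0 < \<xi>" "\<xi> < 1"
  obtains C where "\<And>x. x \<ge> 0 \<Longrightarrow> a * x powr \<xi> \<le> e * x + C"
proof
  define X where "X = (a / e) powr (1 / (1 - \<xi>))"
  have X: "X > 0" using a e by (simp add: X_def)
  have X_powr: "X powr (1 - \<xi>) = a / e" using a e \<xi> by (simp add: X_def powr_powr)
  fix x :: real assume x: "x \<ge> 0"
  show "a * x powr \<xi> \<le> e * x + a * X powr \<xi>"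
  proof (cases "x \<le> X")
    case True
    hence "a * x powr \<xi> \<le> a * X powr \<xi>" using a x \<xi> by (intro mult_left_mono powr_mono2) auto
    moreover have "e * x \<ge> 0" using e x by simp
    ultimately show ?thesis by linarith
  next
    case False
    hence "X powr (1 - \<xi>) \<le> x powr (1 - \<xi>)" using X \<xi> by (intro powr_mono2) auto
    hence "a \<le> e * x powr (1 - \<xi>)" using e X_powr by (simp add: field_simps)
    hence "a * x powr \<xi> \<le> e * x powr (1 - \<xi>) * x powr \<xi>" by (simp add: mult_right_mono)
    also have "\<dots> = e * x" using False X by (simp add: mult.assoc powr_add[symmetric])
    finally have "a * x powr \<xi> \<le> e * x" .
    moreover have "a * X powr \<xi> \<ge> 0" using a X by simp
    ultimately show ?thesis by linarith
  qed
qed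

lemma integrable_powr_exp_neg_powr:
  fixes \<sigma> a \<xi> :: real assumes \<sigma>: "\<sigma> > -1" and a: "a > 0" and \<xi>: "\<xi> > 0"
  shows "(\<lambda>x. x powr \<sigma> * exp (- (a * x powr \<xi>))) integrable_on {0<..}"
proof -
  define k where "k = nat \<lceil>(\<sigma> + 2) / \<xi>\<rceil>"
  have "(\<sigma> + 2) / \<xi> \<le> real k" unfolding k_def by (rule real_nat_ceiling_ge)
  hence k: "\<xi> * k \<ge> \<sigma> + 2" using \<xi> by (simp add: pos_divide_le_eq mult.commute)
  define K where "K = fact k / a ^ k"
  define g where "g = (\<lambda>x::real. if x \<le> 1 then x powr \<sigma> else K * x powr (\<sigma> - \<xi> * k))"
  have "g integrable_on {0<..1}"
    using integrable_on_powr_from_0'[OF \<sigma>, of 1] by (rule integrable_eq) (auto simp: g_def)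
  moreover have "g integrable_on {1..}"
  proof -
    have "(\<lambda>x. x powr (\<sigma> - \<xi> * k)) integrable_on {1..}"
      using has_integral_powr_to_inf[of "\<sigma> - \<xi> * k" 1] k by (auto simp: integrable_on_def)
    hence "(\<lambda>x. K * x powr (\<sigma> - \<xi> * k)) integrable_on {1..}" by (rule integrable_on_mult_right)
    thus ?thesis by (rule integrable_spike_finite[where S="{1}", rotated 2]) (auto simp: g_def)
  qed
  ultimately have g_int: "g integrable_on {0<..}"
    by (rule integrable_Un') (auto intro: negligible_subset[of "{1}"])
  show ?thesis
  proof (rule measurable_bounded_by_integrable_imp_integrable_real[OF _ g_int])
    show "(\<lambda>x. x powr \<sigma> * exp (- (a * x powr \<xi>))) \<in> borel_measurable (lebesgue_on {0<..})"
      by (intro continuous_imp_measurable_on_sets_lebesgue continuous_intros) auto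
    show "({0<..}::real set) \<in> sets lebesgue"
      using borel_open[of "{0<..}::real set"] by (simp add: sets_completionI_sets)
    fix x :: real assume "x \<in> {0<..}"
    hence x: "x > 0" by simp
    show "\<bar>x powr \<sigma> * exp (- (a * x powr \<xi>))\<bar> \<le> g x"
    proof (cases "x \<le> 1")
      case True
      have "x powr \<sigma> * exp (- (a * x powr \<xi>)) \<le> x powr \<sigma> * 1"
        using a x by (intro mult_left_mono) auto
      thus ?thesis using True by (simp add: g_def)
    next
      case False
      have "(a * x powr \<xi>) ^ k / fact k \<le> (\<Sum>n<Suc k. (a * x powr \<xi>) ^ n / fact n)"
        using a x by (intro member_le_sum) auto
      also have "\<dots> \<le> exp (a * x powr \<xi>)" using a x by (intro sum_exp_series_le_exp) simp
      also have "(a * x powr \<xi>) ^ k = a ^ k * x powr (\<xi> * k)"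
      proof -
        have "(x powr \<xi>) ^ k = (x powr \<xi>) powr (real k)" using x by (simp add: powr_realpow)
        also have "\<dots> = x powr (\<xi> * k)" by (simp add: powr_powr)
        finally show ?thesis by (simp add: power_mult_distrib)
      qed
      finally have "exp (- (a * x powr \<xi>)) \<le> K * x powr (- (\<xi> * k))"
        using a x by (simp add: K_def exp_minus powr_minus field_simps)
      hence "x powr \<sigma> * exp (- (a * x powr \<xi>)) \<le> x powr \<sigma> * (K * x powr (- (\<xi> * k)))"
        by (intro mult_left_mono) auto
      also have "\<dots> = K * x powr (\<sigma> - \<xi> * k)" using x by (simp add: powr_diff powr_minus field_simps)
      finally show ?thesis using False by (simp add: g_def)
    qed
  qed
qed

lemma norm_Gamma_le_Gamma_Re:
  fixes s :: complex assumes s: "Re s > 0"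
  shows "norm (Gamma s) \<le> Gamma (Re s)"
proof -
  note complex = Gamma_integral_complex[OF s] and real = Gamma_integral_real[of "Re s"]
  have "norm (integral {0..} (\<lambda>t. of_real t powr (s - 1) / of_real (exp t)))
      \<le> integral {0..} (\<lambda>t. t powr (Re s - 1) / exp t)"
  proof (rule integral_norm_bound_integral)
    show "(\<lambda>t. of_real t powr (s - 1) / of_real (exp t)) integrable_on {0..}" using complex by blast
    show "(\<lambda>t. t powr (Re s - 1) / exp t) integrable_on {0..}" using real s by blast
  qed (simp add: norm_divide norm_powr_real_powr)
  thus ?thesis using complex real s by (simp add: integral_unique)
qed

lemma norm_powr_neg_le:
  fixes z s :: complex assumes z: "Re z \<ge> 0" and y: "y > 0" "cmod z \<ge> y" and s: "Re s > 0"
  shows "norm (z powr (-s)) \<le> y powr (-Re s) * exp (pi / 2 * \<bar>Im s\<bar>)"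
proof -
  have "z \<noteq> 0" using y by auto
  have "norm (z powr (-s)) = exp (- (Re s * ln (cmod z)) + Im s * Im (Ln z))"
    using \<open>z \<noteq> 0\<close> by (simp add: powr_def Re_Ln)
  also have "\<dots> \<le> exp (- (Re s * ln y) + pi / 2 * \<bar>Im s\<bar>)"
  proof -
    have "cmod z > 0" using y by linarith
    hence "ln y \<le> ln (cmod z)" using y by (subst ln_le_cancel_iff) auto
    hence "Re s * ln y \<le> Re s * ln (cmod z)" using s by (intro mult_left_mono) auto
    moreover have "\<bar>Im (Ln z)\<bar> \<le> pi / 2" using Re_Ln_pos_le[OF \<open>z \<noteq> 0\<close>] z by simp
    hence "\<bar>Im s\<bar> * \<bar>Im (Ln z)\<bar> \<le> \<bar>Im s\<bar> * (pi / 2)" by (intro mult_left_mono) auto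
    moreover have "Im s * Im (Ln z) \<le> \<bar>Im s\<bar> * \<bar>Im (Ln z)\<bar>" by (metis abs_ge_self abs_mult)
    ultimately show ?thesis by (simp add: mult.commute)
  qed
  also have "\<dots> = y powr (-Re s) * exp (pi / 2 * \<bar>Im s\<bar>)"
    using y by (simp add: powr_def flip: exp_add)
  finally show ?thesis .
qed


section \<open>The damped cosine transform of a power\<close>

definition damped_cos_Mellin :: "complex \<Rightarrow> real \<Rightarrow> real \<Rightarrow> complex" where
  "damped_cos_Mellin s y \<epsilon> =
     Gamma s * ((of_real \<epsilon> - \<i> * of_real y) powr (-s) + (of_real \<epsilon> + \<i> * of_real y) powr (-s)) / 2"

lemma has_integral_damped_cos_Mellin:
  fixes s :: complex assumes s: "Re s > 0" and \<epsilon>: "\<epsilon> > 0"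
  shows "((\<lambda>x. of_real x powr (s - 1) * of_real (exp (- (\<epsilon> * x))) * of_real (cos (x * y)))
           has_integral damped_cos_Mellin s y \<epsilon>) {0<..}"
proof -
  define z\<^sub>1 z\<^sub>2 where "z\<^sub>1 = of_real \<epsilon> - \<i> * of_real y" and "z\<^sub>2 = of_real \<epsilon> + \<i> * of_real y"
  have "Re z\<^sub>1 > 0" "Re z\<^sub>2 > 0" using \<epsilon> by (auto simp: z\<^sub>1_def z\<^sub>2_def)
  from has_integral_divide[OF has_integral_add[OF has_integral_powr_exp[OF s this(1)]
                                                has_integral_powr_exp[OF s this(2)]], of 2]
  have "((\<lambda>x. (of_real x powr (s - 1) * exp (- (z\<^sub>1 * of_real x)) +
               of_real x powr (s - 1) * exp (- (z\<^sub>2 * of_real x))) / 2)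
          has_integral damped_cos_Mellin s y \<epsilon>) {0<..}"
    by (simp add: damped_cos_Mellin_def z\<^sub>1_def z\<^sub>2_def algebra_simps)
  thus ?thesis
  proof (rule has_integral_eq[rotated])
    fix x :: real
    have "of_real (cos (x * y)) = (exp (\<i> * of_real (x * y)) + exp (- (\<i> * of_real (x * y)))) / (2::complex)"
      by (simp add: cos_exp_eq cos_of_real[symmetric])
    moreover have "exp (- (z\<^sub>1 * of_real x)) = of_real (exp (- (\<epsilon> * x))) * exp (\<i> * of_real (x * y))"
      "exp (- (z\<^sub>2 * of_real x)) = of_real (exp (- (\<epsilon> * x))) * exp (- (\<i> * of_real (x * y)))"
      by (simp_all add: z\<^sub>1_def z\<^sub>2_def exp_of_real[symmetric] algebra_simps flip: exp_add)
    ultimately show "(of_real x powr (s - 1) * exp (- (z\<^sub>1 * of_real x)) +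
                      of_real x powr (s - 1) * exp (- (z\<^sub>2 * of_real x))) / 2
        = of_real x powr (s - 1) * of_real (exp (- (\<epsilon> * x))) * of_real (cos (x * y))"
      by (simp add: algebra_simps add_divide_distrib)
  qed
qed

lemma norm_damped_cos_Mellin_le:
  fixes s :: complex assumes s: "Re s > 0" and y: "y > 0" and \<epsilon>: "\<epsilon> \<ge> 0"
  shows "norm (damped_cos_Mellin s y \<epsilon>) \<le> Gamma (Re s) * (y powr (-Re s) * exp (pi / 2 * \<bar>Im s\<bar>))"
proof -
  define B where "B = y powr (-Re s) * exp (pi / 2 * \<bar>Im s\<bar>)"
  have bound: "norm ((of_real \<epsilon> + \<i> * of_real t) powr (-s)) \<le> B" if "\<bar>t\<bar> = y" for t
    unfolding B_def
  proof (rule norm_powr_neg_le[OF _ y(1) _ s])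
    show "cmod (of_real \<epsilon> + \<i> * of_real t) \<ge> y"
      using abs_Im_le_cmod[of "of_real \<epsilon> + \<i> * of_real t"] that by simp
  qed (use \<epsilon> in simp)
  have "norm ((of_real \<epsilon> - \<i> * of_real y) powr (-s) + (of_real \<epsilon> + \<i> * of_real y) powr (-s)) \<le> 2 * B"
    using norm_triangle_ineq[THEN order.trans, OF add_mono[OF bound[of "-y"] bound[of y]]] y by simp
  hence "norm (Gamma s) * (norm ((of_real \<epsilon> - \<i> * of_real y) powr (-s) + (of_real \<epsilon> + \<i> * of_real y) powr (-s)) / 2)
      \<le> Gamma (Re s) * B"
    using norm_Gamma_le_Gamma_Re[OF s] s by (intro mult_mono) auto
  thus ?thesis by (simp add: damped_cos_Mellin_def B_def norm_mult norm_divide)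
qed

lemma tendsto_damped_cos_Mellin:
  assumes y: "y > 0" and \<epsilon>: "(\<epsilon> \<longlongrightarrow> 0) F"
  shows "((\<lambda>t. damped_cos_Mellin s y (\<epsilon> t)) \<longlongrightarrow> damped_cos_Mellin s y 0) F"
proof -
  have "- (\<i> * of_real y) \<notin> \<real>\<^sub>\<le>\<^sub>0" "\<i> * of_real y \<notin> \<real>\<^sub>\<le>\<^sub>0"
    using y by (auto simp: complex_nonpos_Reals_iff)
  moreover have "((\<lambda>t. of_real (\<epsilon> t) - \<i> * of_real y) \<longlongrightarrow> of_real 0 - \<i> * of_real y) F"
    by (intro tendsto_diff tendsto_of_real \<epsilon> tendsto_const)
  moreover have "((\<lambda>t. of_real (\<epsilon> t) + \<i> * of_real y) \<longlongrightarrow> of_real 0 + \<i> * of_real y) F"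
    by (intro tendsto_add tendsto_of_real \<epsilon> tendsto_const)
  ultimately show ?thesis
    unfolding damped_cos_Mellin_def by (intro tendsto_intros) (use \<epsilon> in auto)
qed

lemma damped_cos_Mellin_0:
  assumes y: "y > 0"
  shows "damped_cos_Mellin s y 0 = Gamma s * of_real y powr (-s) * cos (s * of_real pi / 2)"
proof -
  have "(\<i> * of_real y) powr (-s) = of_real y powr (-s) * exp (- (\<i> * (s * of_real pi / 2)))"
  proof -
    have "(\<i> * of_real y) powr (-s) = of_real y powr (-s) * \<i> powr (-s)"
      using y by (subst mult.commute, intro powr_times_real_left) auto
    thus ?thesis by (simp add: powr_def algebra_simps)
  qed
  moreover have "(- (\<i> * of_real y)) powr (-s) = of_real y powr (-s) * exp (\<i> * (s * of_real pi / 2))"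
  proof -
    have "(- (\<i> * of_real y)) powr (-s) = of_real y powr (-s) * (- \<i>) powr (-s)"
      using y by (subst powr_times_real_left[symmetric]) (auto simp: mult.commute)
    thus ?thesis by (simp add: powr_def algebra_simps)
  qed
  ultimately show ?thesis
    unfolding damped_cos_Mellin_def cos_exp_eq[of "s * of_real pi / 2"] by (simp add: algebra_simps)
qed


section \<open>Termwise integration of the damped integral\<close>

definition cos_series_term :: "complex \<Rightarrow> real \<Rightarrow> real \<Rightarrow> real \<Rightarrow> real \<Rightarrow> nat \<Rightarrow> complex" where
  "cos_series_term \<mu> \<xi> a y \<epsilon> k =
     of_real (-a) ^ k / fact k * damped_cos_Mellin (\<mu> + 1 + of_real (\<xi> * real k)) y \<epsilon>"

definition damped_integrand :: "complex \<Rightarrow> real \<Rightarrow> real \<Rightarrow> real \<Rightarrow> real \<Rightarrow> real \<Rightarrow> complex" where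
  "damped_integrand \<mu> \<xi> a y \<epsilon> x =
     of_real x powr \<mu> * of_real (exp (- a * x powr \<xi>) * cos (x * y) * exp (- (\<epsilon> * x)))"

lemma of_real_powr_add_real_times_nat:
  fixes \<mu> :: complex assumes x: "x > 0"
  shows "complex_of_real x powr (\<mu> + 1 + of_real (\<xi> * real l) - 1) = of_real x powr \<mu> * of_real ((x powr \<xi>) ^ l)"
proof -
  have "complex_of_real x powr (\<mu> + 1 + of_real (\<xi> * real l) - 1) = of_real x powr \<mu> * of_real x powr (of_real (\<xi> * real l))"
    by (simp add: powr_add)
  also have "of_real x powr (of_real (\<xi> * real l)) = (of_real (x powr (\<xi> * real l)) :: complex)"
    by (rule powr_of_real) (use x in auto)
  also have "x powr (\<xi> * real l) = (x powr \<xi>) powr real l" by (simp add: powr_powr)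
  also have "\<dots> = (x powr \<xi>) ^ l" using x by (simp add: powr_realpow)
  finally show ?thesis .
qed

lemma damped_integral_sums:
  fixes \<mu> :: complex and \<xi> a y \<epsilon> :: real
  assumes \<mu>: "Re \<mu> > -1" and \<xi>: "0 < \<xi>" "\<xi> < 1" and a: "a > 0" and \<epsilon>: "\<epsilon> > 0"
  shows "damped_integrand \<mu> \<xi> a y \<epsilon> integrable_on {0<..}"
    and "cos_series_term \<mu> \<xi> a y \<epsilon> sums integral {0<..} (damped_integrand \<mu> \<xi> a y \<epsilon>)"
proof -
  define B where "B = (\<lambda>x. of_real x powr \<mu> * of_real (exp (- (\<epsilon> * x))) * complex_of_real (cos (x * y)))"
  define E where "E = (\<lambda>l x. of_real (- a * x powr \<xi>) ^ l / fact l :: complex)"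
  define P where "P = (\<lambda>N x. \<Sum>l<N. B x * E l x)"
  have P_int: "(P N has_integral (\<Sum>l<N. cos_series_term \<mu> \<xi> a y \<epsilon> l)) {0<..}" for N
    unfolding P_def
  proof (rule has_integral_sum)
    fix l
    have "Re (\<mu> + 1 + of_real (\<xi> * real l)) > 0"
      using \<mu> \<xi> by (simp add: add_pos_nonneg)
    note scaled = has_integral_mult_right[OF has_integral_damped_cos_Mellin[OF this \<epsilon>], of "of_real (-a) ^ l / fact l"]
    have "of_real (-a) ^ l / fact l * (of_real x powr (\<mu> + 1 + of_real (\<xi> * real l) - 1) *
            of_real (exp (- (\<epsilon> * x))) * of_real (cos (x * y))) = B x * E l x" if "x \<in> {0<..}" for x
    proof -
      from that have "x > 0" by simp
      show ?thesis unfolding of_real_powr_add_real_times_nat[OF \<open>x > 0\<close>] B_def E_def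
        by (simp add: mult_ac flip: power_mult_distrib)
    qed
    with scaled show "((\<lambda>x. B x * E l x) has_integral cos_series_term \<mu> \<xi> a y \<epsilon> l) {0<..}"
      unfolding cos_series_term_def by (rule has_integral_eq[rotated])
  qed auto
  obtain C where C: "\<And>x. x \<ge> 0 \<Longrightarrow> a * x powr \<xi> \<le> (\<epsilon> / 2) * x + C"
    using powr_le_linear_plus_const[OF a _ \<xi>, of "\<epsilon> / 2"] \<epsilon> by auto
  define h where "h = (\<lambda>x. exp C * (x powr Re \<mu> * exp (- ((\<epsilon> / 2) * x))))"
  have h_int: "h integrable_on {0<..}"
    using has_integral_powr_exp_real[OF \<mu>, of "\<epsilon> / 2"] \<epsilon> unfolding h_def
    by (intro integrable_on_mult_right) (auto simp: integrable_on_def)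
  have P_bound: "norm (P N x) \<le> h x" if "x \<in> {0<..}" for N x
  proof -
    from that have x: "x > 0" by simp
    have "norm (\<Sum>l<N. E l x) \<le> (\<Sum>l<N. (a * x powr \<xi>) ^ l / fact l)"
      by (rule order.trans[OF norm_sum]) (use a in \<open>simp add: E_def norm_divide norm_power norm_mult abs_mult\<close>)
    also have "\<dots> \<le> exp (a * x powr \<xi>)" using a x by (intro sum_exp_series_le_exp) simp
    also have "\<dots> \<le> exp ((\<epsilon> / 2) * x + C)" using C[of x] x by simp
    finally have "norm (B x) * norm (\<Sum>l<N. E l x) \<le> x powr Re \<mu> * exp (- (\<epsilon> * x)) * exp ((\<epsilon> / 2) * x + C)"
      using x by (intro mult_mono) (auto simp: B_def norm_mult norm_powr_real_powr abs_cos_le_one mult_left_le)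
    also have "\<dots> = h x" by (simp add: h_def algebra_simps flip: exp_add)
    finally show ?thesis by (simp add: P_def norm_mult sum_distrib_left[symmetric])
  qed
  have P_lim: "(\<lambda>N. P N x) \<longlonglongrightarrow> damped_integrand \<mu> \<xi> a y \<epsilon> x" for x
  proof -
    have "(\<lambda>l. E l x) sums exp (of_real (- a * x powr \<xi>))"
      using exp_converges[of "of_real (- a * x powr \<xi>) :: complex"]
      by (simp add: E_def scaleR_conv_of_real divide_inverse mult.commute)
    from sums_mult[OF this, of "B x"]
    show ?thesis
      unfolding sums_def P_def by (simp add: B_def damped_integrand_def exp_of_real[symmetric] mult_ac)
  qed
  have "P N integrable_on {0<..}" for N using P_int by blast
  note DC = dominated_convergence[OF this h_int P_bound P_lim]
  show "damped_integrand \<mu> \<xi> a y \<epsilon> integrable_on {0<..}" by (rule DC(1))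
  show "cos_series_term \<mu> \<xi> a y \<epsilon> sums integral {0<..} (damped_integrand \<mu> \<xi> a y \<epsilon>)"
    using DC(2) unfolding sums_def integral_unique[OF P_int] .
qed


section \<open>Removing the damping\<close>

lemma summable_Gamma_powr_series:
  fixes \<sigma> a \<xi> y :: real
  assumes \<sigma>: "\<sigma> > -1" and a: "a > 0" and \<xi>: "0 < \<xi>" "\<xi> < 1" and y: "y > 0"
  shows "summable (\<lambda>l. a ^ l / fact l * Gamma (\<sigma> + 1 + \<xi> * real l) * y powr (-(\<sigma> + 1 + \<xi> * real l)))"
proof -
  obtain C where C: "\<And>x. x \<ge> 0 \<Longrightarrow> a * x powr \<xi> \<le> (y / 2) * x + C"
    using powr_le_linear_plus_const[OF a _ \<xi>, of "y / 2"] y by auto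
  define h where "h = (\<lambda>x. exp C * (x powr \<sigma> * exp (- ((y / 2) * x))))"
  have h_int: "(h has_integral exp C * (Gamma (\<sigma> + 1) * (y / 2) powr (-(\<sigma> + 1)))) {0<..}"
    unfolding h_def using y by (intro has_integral_mult_right has_integral_powr_exp_real[OF \<sigma>]) auto
  have exponent: "\<sigma> + \<xi> * real l > -1" for l
    using \<sigma> \<xi> by (smt (verit) mult_nonneg_nonneg of_nat_0_le_iff)
  show ?thesis
  proof (rule summableI_nonneg_bounded)
    fix l :: nat
    show "0 \<le> a ^ l / fact l * Gamma (\<sigma> + 1 + \<xi> * real l) * y powr (-(\<sigma> + 1 + \<xi> * real l))"
      using a exponent[of l] by (intro mult_nonneg_nonneg Gamma_real_nonneg) auto
  next
    fix N :: nat
    define Q where "Q = (\<lambda>x. \<Sum>l<N. a ^ l / fact l * (x powr (\<sigma> + \<xi> * real l) * exp (- (y * x))))"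
    have Q_int: "(Q has_integral (\<Sum>l<N. a ^ l / fact l * Gamma (\<sigma> + 1 + \<xi> * real l) * y powr (-(\<sigma> + 1 + \<xi> * real l)))) {0<..}"
      unfolding Q_def
    proof (rule has_integral_sum)
      fix l
      have "\<sigma> + \<xi> * real l + 1 = \<sigma> + 1 + \<xi> * real l" by simp
      from has_integral_mult_right[OF has_integral_powr_exp_real[OF exponent y], of "a ^ l / fact l" l, unfolded this]
      show "((\<lambda>x. a ^ l / fact l * (x powr (\<sigma> + \<xi> * real l) * exp (- (y * x)))) has_integral
          a ^ l / fact l * Gamma (\<sigma> + 1 + \<xi> * real l) * y powr (-(\<sigma> + 1 + \<xi> * real l))) {0<..}"
        by (simp add: mult.assoc)
    qed auto
    have Q_le: "Q x \<le> h x" if "x \<in> {0<..}" for x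
    proof -
      from that have x: "x > 0" by simp
      have "a ^ l / fact l * (x powr (\<sigma> + \<xi> * real l) * exp (- (y * x)))
          = x powr \<sigma> * exp (- (y * x)) * ((a * x powr \<xi>) ^ l / fact l)" for l
        using x by (simp add: powr_add powr_powr powr_realpow[symmetric] power_mult_distrib)
      hence "Q x = x powr \<sigma> * exp (- (y * x)) * (\<Sum>l<N. (a * x powr \<xi>) ^ l / fact l)"
        unfolding Q_def by (simp only: sum_distrib_left)
      also have "\<dots> \<le> x powr \<sigma> * exp (- (y * x)) * exp ((y / 2) * x + C)"
        using a x C[of x] by (intro mult_left_mono order.trans[OF sum_exp_series_le_exp]) auto
      also have "\<dots> = h x" by (simp add: h_def algebra_simps flip: exp_add)
      finally show ?thesis .
    qed
    show "(\<Sum>l<N. a ^ l / fact l * Gamma (\<sigma> + 1 + \<xi> * real l) * y powr (-(\<sigma> + 1 + \<xi> * real l)))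
        \<le> exp C * (Gamma (\<sigma> + 1) * (y / 2) powr (-(\<sigma> + 1)))"
      by (rule has_integral_le[OF Q_int h_int Q_le])
  qed
qed


lemma norm_cos_series_term_le:
  assumes \<mu>: "Re \<mu> > -1" and \<xi>: "\<xi> \<ge> 0" and a: "a \<ge> 0" and y: "y > 0" and \<epsilon>: "\<epsilon> \<ge> 0"
  shows "norm (cos_series_term \<mu> \<xi> a y \<epsilon> k)
      \<le> a ^ k / fact k * Gamma (Re \<mu> + 1 + \<xi> * real k) * y powr (-(Re \<mu> + 1 + \<xi> * real k))
         * exp (pi / 2 * \<bar>Im \<mu>\<bar>)"
proof -
  define s where "s = \<mu> + 1 + of_real (\<xi> * real k)"
  have s: "Re s > 0" using \<mu> \<xi> by (simp add: s_def add_pos_nonneg)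
  have "norm (cos_series_term \<mu> \<xi> a y \<epsilon> k)
      = norm (of_real (-a) ^ k / fact k :: complex) * norm (damped_cos_Mellin s y \<epsilon>)"
    unfolding cos_series_term_def s_def by (rule norm_mult)
  also have "\<dots> \<le> a ^ k / fact k * (Gamma (Re s) * (y powr (-Re s) * exp (pi / 2 * \<bar>Im s\<bar>)))"
    using a by (intro mult_mono norm_damped_cos_Mellin_le[OF s y \<epsilon>]) (auto simp: norm_divide norm_power)
  finally show ?thesis by (simp add: s_def mult_ac)
qed

lemma cos_series_tendsto:
  assumes \<mu>: "Re \<mu> > -1" and \<xi>: "0 < \<xi>" "\<xi> < 1" and a: "a > 0" and y: "y > 0"
    and \<epsilon>: "\<And>n. \<epsilon> n \<ge> 0" "\<epsilon> \<longlonglongrightarrow> 0"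
  shows "summable (cos_series_term \<mu> \<xi> a y 0)"
    and "(\<lambda>n. suminf (cos_series_term \<mu> \<xi> a y (\<epsilon> n))) \<longlonglongrightarrow> suminf (cos_series_term \<mu> \<xi> a y 0)"
proof -
  define M where "M = (\<lambda>k. a ^ k / fact k * Gamma (Re \<mu> + 1 + \<xi> * real k)
                         * y powr (-(Re \<mu> + 1 + \<xi> * real k)) * exp (pi / 2 * \<bar>Im \<mu>\<bar>))"
  have "summable M"
    unfolding M_def using \<mu> a \<xi> y by (intro summable_mult2 summable_Gamma_powr_series) auto
  moreover have "norm (cos_series_term \<mu> \<xi> a y (\<epsilon> n) k) \<le> M k" for n k
    unfolding M_def using \<mu> \<xi> a y \<epsilon>(1) by (intro norm_cos_series_term_le) auto
  moreover have "(\<lambda>n. cos_series_term \<mu> \<xi> a y (\<epsilon> n) k) \<longlonglongrightarrow> cos_series_term \<mu> \<xi> a y 0 k" for k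
    unfolding cos_series_term_def by (intro tendsto_mult_left tendsto_damped_cos_Mellin y \<epsilon>(2))
  ultimately have "(\<forall>\<^sub>F n in sequentially. summable (\<lambda>k. norm (cos_series_term \<mu> \<xi> a y (\<epsilon> n) k))) \<and>
      summable (\<lambda>k. norm (cos_series_term \<mu> \<xi> a y 0 k)) \<and>
      (\<lambda>n. suminf (cos_series_term \<mu> \<xi> a y (\<epsilon> n))) \<longlonglongrightarrow> suminf (cos_series_term \<mu> \<xi> a y 0)"
    by (intro tannerys_theorem[where M = M]) (auto intro!: always_eventually)
  thus "summable (cos_series_term \<mu> \<xi> a y 0)"
    and "(\<lambda>n. suminf (cos_series_term \<mu> \<xi> a y (\<epsilon> n))) \<longlonglongrightarrow> suminf (cos_series_term \<mu> \<xi> a y 0)"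
    using summable_norm_cancel by blast+
qed

lemma damped_integral_tendsto:
  assumes \<mu>: "Re \<mu> > -1" and \<xi>: "0 < \<xi>" "\<xi> < 1" and a: "a > 0"
    and \<epsilon>: "\<And>n. \<epsilon> n > 0" "\<epsilon> \<longlonglongrightarrow> 0"
  shows "damped_integrand \<mu> \<xi> a y 0 integrable_on {0<..}"
    and "(\<lambda>n. integral {0<..} (damped_integrand \<mu> \<xi> a y (\<epsilon> n))) \<longlonglongrightarrow> integral {0<..} (damped_integrand \<mu> \<xi> a y 0)"
proof -
  define h where "h = (\<lambda>x. x powr Re \<mu> * exp (- (a * x powr \<xi>)))"
  have h_int: "h integrable_on {0<..}"
    unfolding h_def using \<mu> a \<xi> by (intro integrable_powr_exp_neg_powr) auto
  have bound: "norm (damped_integrand \<mu> \<xi> a y (\<epsilon> n) x) \<le> h x" if "x \<in> {0<..}" for n x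
  proof -
    have "\<bar>cos (x * y)\<bar> * exp (- (\<epsilon> n * x)) \<le> 1"
      using that \<epsilon>(1)[of n] abs_cos_le_one[of "x * y"] by (intro mult_le_one) auto
    hence "x powr Re \<mu> * exp (- (a * x powr \<xi>)) * (\<bar>cos (x * y)\<bar> * exp (- (\<epsilon> n * x))) \<le> h x"
      unfolding h_def by (intro mult_left_le) auto
    thus ?thesis using that by (simp add: damped_integrand_def norm_mult norm_powr_real_powr abs_mult mult_ac)
  qed
  have lim: "(\<lambda>n. damped_integrand \<mu> \<xi> a y (\<epsilon> n) x) \<longlonglongrightarrow> damped_integrand \<mu> \<xi> a y 0 x" for x
    unfolding damped_integrand_def by (intro tendsto_intros \<epsilon>(2))
  have "damped_integrand \<mu> \<xi> a y (\<epsilon> n) integrable_on {0<..}" for n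
    using \<mu> \<xi> a \<epsilon>(1) by (rule damped_integral_sums(1))
  note DC = dominated_convergence[OF this h_int bound lim]
  show "damped_integrand \<mu> \<xi> a y 0 integrable_on {0<..}" by (rule DC(1))
  show "(\<lambda>n. integral {0<..} (damped_integrand \<mu> \<xi> a y (\<epsilon> n))) \<longlonglongrightarrow> integral {0<..} (damped_integrand \<mu> \<xi> a y 0)"
    by (rule DC(2))
qed

lemma cos_series_term_0:
  fixes \<mu> :: complex and a \<xi> y :: real assumes y: "y > 0"
  shows "cos_series_term \<mu> \<xi> a y 0 k
       = - (of_real y powr (- \<mu> - 1)) * ((1 / fact k) * (of_real (- (a / y powr \<xi>))) ^ k
           * Gamma (\<mu> + 1 + of_real (\<xi> * real k)) * sin (of_real (pi / 2) * (\<mu> + of_real (\<xi> * real k))))"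
proof -
  define s where "s = \<mu> + 1 + of_real (\<xi> * real k)"
  define w where "w = of_real (pi / 2) * (\<mu> + of_real (\<xi> * real k))"
  have cos_eq: "cos (s * of_real pi / 2) = - sin w"
  proof -
    have "s * of_real pi / 2 = w + of_real (pi / 2)" by (simp add: s_def w_def algebra_simps)
    hence "cos (s * of_real pi / 2) = cos w * cos (of_real (pi / 2)) - sin w * sin (of_real (pi / 2))"
      by (simp only: cos_add)
    also have "cos (of_real (pi / 2)) = (0::complex)" by (simp only: cos_of_real) simp
    also have "sin (of_real (pi / 2)) = (1::complex)" by (simp only: sin_of_real) simp
    finally show ?thesis by simp
  qed
  have y_powr_eq: "of_real y powr (-s) = of_real y powr (- \<mu> - 1) * of_real (inverse ((y powr \<xi>) ^ k))"
  proof -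
    have "of_real y powr (-s) = of_real y powr ((- \<mu> - 1) + of_real (- (\<xi> * real k)))"
      by (rule arg_cong[where f = "\<lambda>t. of_real y powr t"]) (simp add: s_def algebra_simps)
    also have "\<dots> = of_real y powr (- \<mu> - 1) * of_real y powr (of_real (- (\<xi> * real k)))"
      by (simp only: powr_add)
    also have "of_real y powr (of_real (- (\<xi> * real k))) = (of_real (y powr (- (\<xi> * real k))) :: complex)"
      by (rule powr_of_real) (use y in auto)
    also have "y powr (- (\<xi> * real k)) = inverse ((y powr \<xi>) powr real k)"
      by (simp add: powr_minus powr_powr)
    also have "(y powr \<xi>) powr real k = (y powr \<xi>) ^ k" using y by (simp add: powr_realpow)
    finally show ?thesis .
  qed
  have power_eq: "(of_real (- (a / y powr \<xi>)) :: complex) ^ k = of_real (-a) ^ k / of_real (y powr \<xi>) ^ k"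
    by (simp add: power_divide[symmetric])
  have "(of_real (y powr \<xi>) :: complex) ^ k \<noteq> 0" using y by simp
  thus ?thesis
    unfolding cos_series_term_def damped_cos_Mellin_0[OF y] s_def[symmetric] w_def[symmetric]
      cos_eq y_powr_eq power_eq
    by (simp add: field_simps)
qed

theorem mainTheorem1:
  fixes \<mu> :: complex and \<xi> a y :: real
  assumes "Re \<mu> > -1" and "0 < \<xi>" and "\<xi> < 1" and "a > 0" and "y > 0"
  shows "\<exists>S. (\<lambda>l::nat. (1 / fact l) * (complex_of_real (- (a / y powr \<xi>))) ^ l
              * Gamma (\<mu> + 1 + complex_of_real (\<xi> * real l))
              * sin (complex_of_real (pi / 2) * (\<mu> + complex_of_real (\<xi> * real l)))) sums S
          \<and> ((\<lambda>x::real. (complex_of_real x) powr \<mu> * complex_of_real (exp (- a * x powr \<xi>))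
                * complex_of_real (cos (x * y)))
             has_integral (- ((complex_of_real y) powr (- \<mu> - 1)) * S)) {0<..}"
proof -
  define \<epsilon> where "\<epsilon> = (\<lambda>n::nat. inverse (real (Suc n)))"
  have \<epsilon>: "\<And>n. \<epsilon> n > 0" "\<epsilon> \<longlonglongrightarrow> 0"
    unfolding \<epsilon>_def by (simp, rule LIMSEQ_inverse_real_of_nat)
  define Y where "Y = (complex_of_real y) powr (- \<mu> - 1)"
  have "Y \<noteq> 0" using assms(5) by (simp add: Y_def)
  define I where "I = integral {0<..} (damped_integrand \<mu> \<xi> a y 0)"
  note integrals = damped_integral_tendsto[OF assms(1-4) \<epsilon>]
  note series = cos_series_tendsto[OF assms \<epsilon>(1)[THEN less_imp_le] \<epsilon>(2)]
  have "(\<lambda>n. suminf (cos_series_term \<mu> \<xi> a y (\<epsilon> n))) \<longlonglongrightarrow> I"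
    using integrals(2) damped_integral_sums(2)[OF assms(1-4) \<epsilon>(1)] unfolding I_def by (simp add: sums_iff)
  hence "cos_series_term \<mu> \<xi> a y 0 sums I"
    using series LIMSEQ_unique summable_sums by metis
  hence "(\<lambda>l. cos_series_term \<mu> \<xi> a y 0 l / (- Y)) sums (I / (- Y))" by (rule sums_divide)
  moreover have "(damped_integrand \<mu> \<xi> a y 0 has_integral - Y * (I / (- Y))) {0<..}"
    using integrals(1) \<open>Y \<noteq> 0\<close> unfolding I_def by (simp add: integrable_integral)
  moreover have "damped_integrand \<mu> \<xi> a y 0
      = (\<lambda>x. of_real x powr \<mu> * of_real (exp (- a * x powr \<xi>)) * of_real (cos (x * y)))"
    by (simp add: fun_eq_iff damped_integrand_def)
  ultimately show ?thesis
    using \<open>Y \<noteq> 0\<close> by (intro exI[of _ "I / (- Y)"]) (simp add: cos_series_term_0 assms(5) Y_def mult.assoc)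
qed

end
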